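(* Let $f:\{0,1\}^n\to\mathbb{R}$ and suppose $\{x,x+\mathbf{e}_i,x+\mathbf{e}_j,x+\mathbf{e}_i+\mathbf{e}_j\}$ is a violated square of $f$. Then it is possible to decrease all the values of $f$ either on $\{y: y\le x\}$ or on $\{y : y \ge x+\mathbf{e}_i+\mathbf{e}_j\}$ by a common constant so that, in the resulting function, the square $\{x,x+\mathbf{e}_i,x+\mathbf{e}_j,x+\mathbf{e}_i+\mathbf{e}_j\}$ is no longer violated and no square that was not violated in $f$ becomes violated.
   Context: $\mathbf{e}_i$ denotes the $i$-th standard basis vector of $\{0,1\}^n$ and $\le$ is the coordinatewise order. A square is a set $\{x, x+\mathbf{e}_i, x+\mathbf{e}_j, x+\mathbf{e}_i+\mathbf{e}_j\}$ with $i\neq j$, $x_i=x_j=0$; it is violated (for $f$) if $f(x)+f(x+\mathbf{e}_i+\mathbf{e}_j) > f(x+\mathbf{e}_i)+f(x+\mathbf{e}_j)$. *)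

theory Defs
  imports Main "HOL.Real"
begin

text \<open>The order on
  functions is the pointwise (coordinatewise) order from Main.\<close>

definition cube :: "nat \<Rightarrow> (nat \<Rightarrow> nat) set" where
  "cube n = {x. (\<forall>k<n. x k \<le> 1) \<and> (\<forall>k\<ge>n. x k = 0)}"

definition unitv :: "nat \<Rightarrow> nat \<Rightarrow> nat" where
  "unitv i = (\<lambda>k. if k = i then 1 else 0)"

definition vadd :: "(nat \<Rightarrow> nat) \<Rightarrow> (nat \<Rightarrow> nat) \<Rightarrow> nat \<Rightarrow> nat" (infixl "\<oplus>" 65) where
  "x \<oplus> y = (\<lambda>k. x k + y k)"

text \<open>The square {x, x+e_i, x+e_j, x+e_i+e_j} in {0,1}^n (i ~= j, x_i = x_j = 0).\<close>
definition is_square :: "nat \<Rightarrow> (nat \<Rightarrow> nat) \<Rightarrow> nat \<Rightarrow> nat \<Rightarrow> bool" where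
  "is_square n x i j \<longleftrightarrow> x \<in> cube n \<and> i < n \<and> j < n \<and> i \<noteq> j \<and> x i = 0 \<and> x j = 0"

definition violated :: "((nat \<Rightarrow> nat) \<Rightarrow> real) \<Rightarrow> (nat \<Rightarrow> nat) \<Rightarrow> nat \<Rightarrow> nat \<Rightarrow> bool" where
  "violated f x i j \<longleftrightarrow>
     f x + f (x \<oplus> unitv i \<oplus> unitv j) > f (x \<oplus> unitv i) + f (x \<oplus> unitv j)"

end

theory Submission
  imports Defs
begin

text \<open>Lowering \<open>f\<close> by \<open>c \<ge> 0\<close> on the principal ideal \<open>{y. y \<le> x}\<close> of the cube can only
  decrease \<open>f p + f t - f a - f b\<close> for every square \<open>p, a, b, t\<close>, because \<open>t\<close> is the join of
  \<open>a\<close> and \<open>b\<close> and \<open>p\<close> lies below both: if \<open>t\<close> lies in the ideal so do all four corners,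
  and otherwise the ideal contains at most one of \<open>a, b\<close>, and \<open>p\<close> whenever it contains one.
  For the violated square at \<open>x\<close> itself only the corner \<open>x\<close> is lowered, so taking \<open>c\<close> equal
  to the violation removes it.\<close>

lemma shift_atMost_square_mono:
  fixes f :: "'a::lattice \<Rightarrow> real" and x :: 'a
  assumes "p \<le> a" "p \<le> b" "c \<ge> 0"
    and "f p + f (sup a b) \<le> f a + f b"
  defines "g \<equiv> \<lambda>y. if y \<le> x then f y - c else f y"
  shows "g p + g (sup a b) \<le> g a + g b"
proof (cases "sup a b \<le> x")
  case True
  then have "a \<le> x" "b \<le> x" "p \<le> x"
    using assms(1) by (auto intro: order_trans)
  with True show ?thesis
    using assms(4) by (simp add: g_def)
next
  case False
  then consider "a \<le> x" "\<not> b \<le> x" | "\<not> a \<le> x" "b \<le> x" | "\<not> a \<le> x" "\<not> b \<le> x"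
    by fastforce
  then show ?thesis
  proof cases
    case 1
    then have "p \<le> x" using assms(1) order_trans by blast
    with 1 False show ?thesis using assms(4) by (simp add: g_def)
  next
    case 2
    then have "p \<le> x" using assms(2) order_trans by blast
    with 2 False show ?thesis using assms(4) by (simp add: g_def)
  next
    case 3
    with False show ?thesis using assms(3,4) by (simp add: g_def)
  qed
qed

lemma le_vadd_unitv: "x \<le> x \<oplus> unitv i"
  by (simp add: le_fun_def vadd_def)

lemma not_vadd_unitv_le: "\<not> x \<oplus> unitv i \<le> x"
  by (simp add: le_fun_def vadd_def unitv_def exI[of _ i])

lemma vadd_unitv_unitv_eq_sup:
  assumes "i \<noteq> j"
  shows "x \<oplus> unitv i \<oplus> unitv j = sup (x \<oplus> unitv i) (x \<oplus> unitv j)"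
  using assms by (auto simp: vadd_def unitv_def fun_eq_iff sup_nat_def)

lemma violated_shift_atMost:
  assumes "i \<noteq> j" "c \<ge> 0" "\<not> violated f y i j"
  shows "\<not> violated (\<lambda>z. if z \<le> x then f z - c else f z) y i j"
  using shift_atMost_square_mono[where p = y and a = "y \<oplus> unitv i" and b = "y \<oplus> unitv j",
      OF le_vadd_unitv le_vadd_unitv \<open>c \<ge> 0\<close>]
    assms(3)
  unfolding violated_def vadd_unitv_unitv_eq_sup[OF \<open>i \<noteq> j\<close>] not_less
  by blast

lemma not_violated_shift_atMost_by_excess:
  fixes f :: "(nat \<Rightarrow> nat) \<Rightarrow> real" and x :: "nat \<Rightarrow> nat"
  assumes "i \<noteq> j"
  defines "c \<equiv> f x + f (x \<oplus> unitv i \<oplus> unitv j) - f (x \<oplus> unitv i) - f (x \<oplus> unitv j)"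
  shows "\<not> violated (\<lambda>z. if z \<le> x then f z - c else f z) x i j"
proof -
  have "\<not> x \<oplus> unitv i \<oplus> unitv j \<le> x"
    using not_vadd_unitv_le le_vadd_unitv order_trans by metis
  then show ?thesis
    by (simp add: violated_def c_def not_vadd_unitv_le)
qed

lemma cube_down_closed: "z \<in> cube n \<Longrightarrow> y \<le> z \<Longrightarrow> y \<in> cube n"
  by (force simp: cube_def le_fun_def intro: order_trans)

theorem lemma2:
  fixes n :: nat and f :: "(nat \<Rightarrow> nat) \<Rightarrow> real" and x :: "nat \<Rightarrow> nat" and i j :: nat
  assumes "is_square n x i j" and "violated f x i j"
  shows "\<exists>c::real. c > 0 \<and>
     (\<exists>D \<in> {{y \<in> cube n. y \<le> x}, {y \<in> cube n. x \<oplus> unitv i \<oplus> unitv j \<le> y}}.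
        let g = (\<lambda>y. if y \<in> D then f y - c else f y) in
          \<not> violated g x i j \<and>
          (\<forall>x' i' j'. is_square n x' i' j' \<and> \<not> violated f x' i' j' \<longrightarrow> \<not> violated g x' i' j'))"
proof -
  define c where "c = f x + f (x \<oplus> unitv i \<oplus> unitv j) - f (x \<oplus> unitv i) - f (x \<oplus> unitv j)"
  have "c > 0"
    using assms(2) by (simp add: violated_def c_def)
  have "i \<noteq> j" "x \<in> cube n"
    using assms(1) by (simp_all add: is_square_def)
  define g where "g = (\<lambda>y. if y \<le> x then f y - c else f y)"
  have "\<not> violated g x i j"
    unfolding g_def c_def by (rule not_violated_shift_atMost_by_excess[OF \<open>i \<noteq> j\<close>])
  moreover have "\<not> violated g x' i' j'"
    if "is_square n x' i' j'" "\<not> violated f x' i' j'" for x' i' j'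
    using that violated_shift_atMost \<open>c > 0\<close> by (simp add: g_def is_square_def)
  moreover have "(\<lambda>y. if y \<in> {y \<in> cube n. y \<le> x} then f y - c else f y) = g"
    using \<open>x \<in> cube n\<close> cube_down_closed by (fastforce simp: g_def)
  ultimately show ?thesis
    using \<open>c > 0\<close> by (auto simp: Let_def)
qed

end
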